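(* For $p\in\mathbb{R}\setminus\{0\}$ let $A_p:\mathcal{P}^1_2\to\mathbb{R}^2$ be $A_p(\rho)=p\rho^{1/p}$ (componentwise), and let $A_\infty(\rho)=\log\rho$ (componentwise). For $p\in(1,+\infty]$ let $c_p(\rho)$ denote the curvature of the plane curve $A_p(\mathcal{P}^1_2)\subset\mathbb{R}^2$ at the point $A_p(\rho)$, i.e. for a regular parametrization $t\mapsto(x(t),y(t))$ of the curve, $c_p=\frac{|x'y''-x''y'|}{((x')^2+(y')^2)^{3/2}}$. Then: (i) if $p\in(1,2)$, the function $c_p:\mathcal{P}^1_2\to\mathbb{R}$ is strictly Schur-decreasing; (ii) if $p\in(2,+\infty]$, the function $c_p:\mathcal{P}^1_2\to\mathbb{R}$ is strictly Schur-increasing.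
   Context: $\mathcal{P}^1_2=\{\rho\in\mathbb{R}^2:\rho_1+\rho_2=1,\ \rho_i>0\}$. For $x\in\mathbb{R}^n$, $x^{\downarrow}$ is $x$ with components in decreasing order; $x\succ y$ means $\sum_{i=1}^k x^{\downarrow}_i\le\sum_{i=1}^k y^{\downarrow}_i$ for $k<n$ with equality for $k=n$. A function $f$ is strictly Schur-increasing if $x\succ y$ implies $f(x)\ge f(y)$, with strict inequality whenever $x$ is not a permutation of $y$; strictly Schur-decreasing if $x\succ y$ implies $f(x)\le f(y)$, with strict inequality whenever $x$ is not a permutation of $y$. (The curve $A_p(\mathcal{P}^1_2)$ is the pull-back picture of the $\alpha$-geometry with $p=\frac{2}{1-\alpha}$.) *)

theory Defs
  imports "HOL-Analysis.Analysis"
begin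

definition P12 :: "(real \<times> real) set" where
  "P12 = {\<rho>. fst \<rho> + snd \<rho> = 1 \<and> fst \<rho> > 0 \<and> snd \<rho> > 0}"

text \<open>Componentwise map: for finite nonzero p, r \<mapsto> p r^(1/p); for p = +\<infinity>, r \<mapsto> log r.
  The value at -\<infinity> is irrelevant (never used).\<close>
definition Acomp :: "ereal \<Rightarrow> real \<Rightarrow> real" where
  "Acomp p r = (case p of ereal q \<Rightarrow> q * r powr (1 / q) | PInfty \<Rightarrow> ln r | MInfty \<Rightarrow> 0)"

definition A :: "ereal \<Rightarrow> real \<times> real \<Rightarrow> real \<times> real" where
  "A p \<rho> = (Acomp p (fst \<rho>), Acomp p (snd \<rho>))"

definition curvature :: "(real \<Rightarrow> real \<times> real) \<Rightarrow> real \<Rightarrow> real" where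
  "curvature \<gamma> t =
     (let x1 = deriv (\<lambda>s. fst (\<gamma> s)) t; y1 = deriv (\<lambda>s. snd (\<gamma> s)) t;
          x2 = deriv (deriv (\<lambda>s. fst (\<gamma> s))) t; y2 = deriv (deriv (\<lambda>s. snd (\<gamma> s))) t
      in \<bar>x1 * y2 - x2 * y1\<bar> / (x1\<^sup>2 + y1\<^sup>2) powr (3/2))"

definition curv :: "ereal \<Rightarrow> real \<times> real \<Rightarrow> real" where
  "curv p \<rho> = curvature (\<lambda>t. A p (t, 1 - t)) (fst \<rho>)"

text \<open>Majorization on R^2 in the paper's convention: x \<succ> y iff x\<down>_1 \<le> y\<down>_1 and equal sums.\<close>
definition majorizes :: "real \<times> real \<Rightarrow> real \<times> real \<Rightarrow> bool" where
  "majorizes x y \<longleftrightarrow> max (fst x) (snd x) \<le> max (fst y) (snd y) \<and> fst x + snd x = fst y + snd y"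

definition is_perm2 :: "real \<times> real \<Rightarrow> real \<times> real \<Rightarrow> bool" where
  "is_perm2 x y \<longleftrightarrow> x = y \<or> x = prod.swap y"

definition strictly_schur_increasing_on :: "(real \<times> real) set \<Rightarrow> (real \<times> real \<Rightarrow> real) \<Rightarrow> bool" where
  "strictly_schur_increasing_on S f \<longleftrightarrow>
     (\<forall>x\<in>S. \<forall>y\<in>S. majorizes x y \<longrightarrow> f x \<ge> f y \<and> (\<not> is_perm2 x y \<longrightarrow> f x > f y))"

definition strictly_schur_decreasing_on :: "(real \<times> real) set \<Rightarrow> (real \<times> real \<Rightarrow> real) \<Rightarrow> bool" where
  "strictly_schur_decreasing_on S f \<longleftrightarrow>
     (\<forall>x\<in>S. \<forall>y\<in>S. majorizes x y \<longrightarrow> f x \<le> f y \<and> (\<not> is_perm2 x y \<longrightarrow> f x < f y))"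

end

theory Submission
  imports Defs
begin

(* With q = 1/p (and q = 0 for p = \<infinity>) the parametrization t \<mapsto> A_p(t, 1 - t) has velocity
   (t^(q-1), -(1-t)^(q-1)), so its curvature is
   (1 - q) (t(1-t))^(q-2) / (t^(2q-2) + (1-t)^(2q-2))^(3/2).
   This is symmetric under t \<mapsto> 1 - t, hence c_p is a function of the larger coordinate
   m \<in> [1/2, 1), and x \<succ> y just says m(x) \<le> m(y). Multiplied by the positive factor
   t(1-t)(t^(2q-2) + (1-t)^(2q-2)), the derivative of log c_p becomes a sum of two terms which,
   for t > 1/2, both have the sign of 2q - 1: so c_p strictly increases in m for p < 2 and
   strictly decreases in m for p > 2. *)

lemma strictly_schur_decreasing_on_iff_uminus:
  "strictly_schur_decreasing_on S f \<longleftrightarrow> strictly_schur_increasing_on S (\<lambda>x. - f x)"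
  unfolding strictly_schur_decreasing_on_def strictly_schur_increasing_on_def by auto

lemma P12_max_bounds: "\<rho> \<in> P12 \<Longrightarrow> max (fst \<rho>) (snd \<rho>) \<in> {1/2..<1}"
  by (auto simp: P12_def max_def)

lemma P12_is_perm2_if_max_eq:
  assumes "x \<in> P12" "y \<in> P12" "max (fst x) (snd x) = max (fst y) (snd y)"
  shows "is_perm2 x y"
  using assms by (cases x; cases y) (auto simp: P12_def is_perm2_def max_def split: if_splits)

lemma strictly_schur_increasing_on_P12I:
  assumes f: "\<forall>\<rho>\<in>P12. f \<rho> = h (max (fst \<rho>) (snd \<rho>))"
    and h: "strict_antimono_on {1/2..<1} h"
  shows "strictly_schur_increasing_on P12 f"
  unfolding strictly_schur_increasing_on_def
proof (intro ballI impI conjI)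
  fix x y assume x: "x \<in> P12" and y: "y \<in> P12" and "majorizes x y"
  define mx where "mx = max (fst x) (snd x)"
  define my where "my = max (fst y) (snd y)"
  have "mx \<le> my" using \<open>majorizes x y\<close> by (simp add: majorizes_def mx_def my_def)
  have bounds: "mx \<in> {1/2..<1}" "my \<in> {1/2..<1}"
    using P12_max_bounds[OF x] P12_max_bounds[OF y] by (simp_all add: mx_def my_def)
  have fxy: "f x = h mx" "f y = h my" using f x y by (simp_all add: mx_def my_def)
  have strict: "f y < f x" if "mx \<noteq> my"
    using monotone_onD[OF h bounds] \<open>mx \<le> my\<close> that fxy by simp
  then show "f y \<le> f x" using fxy by fastforce
  show "f y < f x" if "\<not> is_perm2 x y"
    using strict P12_is_perm2_if_max_eq[OF x y] that by (auto simp: mx_def my_def)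
qed

lemma mult_powr_diff_pos:
  fixes u v e :: real
  assumes "0 < v" "v < u" "e \<noteq> 0"
  shows "0 < e * (u powr e - v powr e)"
proof (cases "e > 0")
  case True
  then show ?thesis using assms by (simp add: powr_less_mono2)
next
  case False
  then show ?thesis using assms by (simp add: mult_neg_neg powr_less_mono2_neg)
qed

lemma deriv_deriv_eqI:
  fixes f f' :: "real \<Rightarrow> real"
  assumes "open S" "t \<in> S" "\<And>s. s \<in> S \<Longrightarrow> (f has_real_derivative f' s) (at s)"
    and "(f' has_real_derivative f'') (at t)"
  shows "deriv (deriv f) t = f''"
proof -
  have "\<forall>\<^sub>F s in nhds t. deriv f s = f' s"
    using eventually_nhds_in_open[OF assms(1,2)] by eventually_elim (use assms(3) DERIV_imp_deriv in blast)
  then have "deriv (deriv f) t = deriv f' t" by (rule deriv_cong_ev) simp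
  also have "\<dots> = f''" using assms(4) by (rule DERIV_imp_deriv)
  finally show ?thesis .
qed

lemma curvature_eqI:
  fixes X Y :: "real \<Rightarrow> real"
  assumes "open S" "t \<in> S"
    and "\<And>s. s \<in> S \<Longrightarrow> (X has_real_derivative X' s) (at s)" "(X' has_real_derivative X'') (at t)"
    and "\<And>s. s \<in> S \<Longrightarrow> (Y has_real_derivative Y' s) (at s)" "(Y' has_real_derivative Y'') (at t)"
  shows "curvature (\<lambda>s. (X s, Y s)) t = \<bar>X' t * Y'' - X'' * Y' t\<bar> / ((X' t)\<^sup>2 + (Y' t)\<^sup>2) powr (3/2)"
proof -
  have "deriv X t = X' t" "deriv Y t = Y' t" using assms(2,3,5) by (simp_all add: DERIV_imp_deriv)
  moreover have "deriv (deriv X) t = X''" "deriv (deriv Y) t = Y''"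
    using deriv_deriv_eqI assms by blast+
  ultimately show ?thesis by (simp add: curvature_def Let_def)
qed

definition log_curv :: "real \<Rightarrow> real \<Rightarrow> real" where
  "log_curv q t = (q - 2) * (ln t + ln (1 - t)) - 3/2 * ln (t powr (2*q - 2) + (1 - t) powr (2*q - 2))"

lemma log_curv_one_minus: "log_curv q (1 - t) = log_curv q t"
  unfolding log_curv_def by (simp add: algebra_simps)

definition log_curv_deriv :: "real \<Rightarrow> real \<Rightarrow> real" where
  "log_curv_deriv q t = (q - 2) * (1/t - 1/(1 - t))
     - 3 * (q - 1) * (t powr (2*q - 3) - (1 - t) powr (2*q - 3)) / (t powr (2*q - 2) + (1 - t) powr (2*q - 2))"

lemma has_real_derivative_log_curv:
  assumes "0 < t" "t < 1"
  shows "(log_curv q has_real_derivative log_curv_deriv q t) (at t)"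
proof -
  have "0 < t powr (2*q - 2) + (1 - t) powr (2*q - 2)" using assms by (simp add: add_pos_pos)
  then show ?thesis
    unfolding log_curv_def log_curv_deriv_def using assms
    by (auto intro!: derivative_eq_intros) (simp add: field_simps)
qed

lemma log_curv_deriv_sign:
  assumes "1/2 < u" "u < 1" "q < 3/2" "q \<noteq> 1/2"
  shows "0 < (2*q - 1) * log_curv_deriv q u"
proof -
  define v a b where "v = 1 - u" and "a = u powr (2*q - 3)" and "b = v powr (2*q - 3)"
  have "0 < v" "v < u" "0 < u" using assms by (simp_all add: v_def)
  have pow: "u powr (2*q - 2) = a * u" "v powr (2*q - 2) = b * v"
     "u powr (2*q - 1) = a * u * u" "v powr (2*q - 1) = b * v * v"
    using \<open>0 < u\<close> \<open>0 < v\<close> powr_add[of u "2*q - 3" 1] powr_add[of v "2*q - 3" 1]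
      powr_add[of u "2*q - 3" 2] powr_add[of v "2*q - 3" 2]
    by (simp_all add: a_def b_def power2_eq_square)
  have "0 < (2*q - 3) * (a - b)"
    unfolding a_def b_def using assms \<open>0 < v\<close> \<open>v < u\<close> by (intro mult_powr_diff_pos) auto
  then have "a < b" using assms by (simp add: zero_less_mult_iff)
  have "0 < (2*q - 1) * (a * u * u - b * v * v)"
    unfolding pow(3,4)[symmetric] using assms \<open>0 < v\<close> \<open>v < u\<close> by (intro mult_powr_diff_pos) auto
  have "0 < a * u + b * v" using \<open>0 < u\<close> \<open>0 < v\<close> by (simp add: a_def b_def add_pos_pos)
  then have denom: "0 < u * v * (a * u + b * v)" using \<open>0 < u\<close> \<open>0 < v\<close> by simp
  have "log_curv_deriv q u = (q - 2) * (1/u - 1/v) - 3 * (q - 1) * (a - b) / (a * u + b * v)"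
    unfolding log_curv_deriv_def pow(1,2)[unfolded v_def] a_def b_def v_def ..
  also have "\<dots> * (u * v * (a * u + b * v))
      = (q - 2) * (v - u) * (a * u + b * v) - 3 * (q - 1) * (a - b) * (u * v)"
  proof -
    have "(k * (1/u - 1/v) - c / D) * (u * v * D) = k * (v - u) * D - c * (u * v)" if "D \<noteq> 0" for k c D
      using \<open>0 < u\<close> \<open>0 < v\<close> that by (simp add: field_simps)
    then show ?thesis using \<open>0 < a * u + b * v\<close> by (simp add: mult.assoc)
  qed
  also have "\<dots> = (1 - 2*q) * u * v * (a - b) + (q - 2) * (b * v * v - a * u * u)"
    by (simp add: algebra_simps)
  also have "\<dots> * (2*q - 1) = (2*q - 1)\<^sup>2 * (u * v * (b - a)) + (2 - q) * ((2*q - 1) * (a * u * u - b * v * v))"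
    by (simp add: algebra_simps power2_eq_square)
  also have "\<dots> > 0"
    using assms \<open>0 < u\<close> \<open>0 < v\<close> \<open>a < b\<close> \<open>0 < (2*q - 1) * (a * u * u - b * v * v)\<close>
    by (intro add_pos_pos mult_pos_pos[of "2 - q"] mult_pos_pos[of "(2*q - 1)\<^sup>2"]) auto
  finally have "0 < u * v * (a * u + b * v) * ((2*q - 1) * log_curv_deriv q u)"
    by (simp only: ac_simps)
  then show ?thesis using denom by (rule zero_less_mult_pos)
qed

lemma log_curv_diff_sign:
  assumes "1/2 \<le> a" "a < b" "b < 1" "q < 3/2" "q \<noteq> 1/2"
  shows "0 < (2*q - 1) * (log_curv q b - log_curv q a)"
proof -
  obtain z where "a < z" "z < b" and mvt: "log_curv q b - log_curv q a = (b - a) * log_curv_deriv q z"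
    using MVT2[OF \<open>a < b\<close> has_real_derivative_log_curv] assms by force
  then have "0 < (2*q - 1) * log_curv_deriv q z"
    using assms by (intro log_curv_deriv_sign) auto
  then show ?thesis unfolding mvt using \<open>a < b\<close> by (simp add: mult.left_commute)
qed

lemma curvature_eq_log_curv:
  fixes X Y :: "real \<Rightarrow> real"
  assumes "q < 1" "0 < t" "t < 1"
    and dX: "\<And>s. 0 < s \<Longrightarrow> s < 1 \<Longrightarrow> (X has_real_derivative s powr (q - 1)) (at s)"
    and dY: "\<And>s. 0 < s \<Longrightarrow> s < 1 \<Longrightarrow> (Y has_real_derivative - ((1 - s) powr (q - 1))) (at s)"
  shows "curvature (\<lambda>s. (X s, Y s)) t = (1 - q) * exp (log_curv q t)"
proof -
  have "((\<lambda>s. s powr (q - 1)) has_real_derivative (q - 1) * t powr (q - 2)) (at t)"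
    using \<open>0 < t\<close> by (auto intro!: derivative_eq_intros)
  moreover have "((\<lambda>s. - ((1 - s) powr (q - 1))) has_real_derivative (q - 1) * (1 - t) powr (q - 2)) (at t)"
    using \<open>t < 1\<close> by (auto intro!: derivative_eq_intros)
  ultimately have "curvature (\<lambda>s. (X s, Y s)) t
      = \<bar>t powr (q - 1) * ((q - 1) * (1 - t) powr (q - 2)) - (q - 1) * t powr (q - 2) * - ((1 - t) powr (q - 1))\<bar>
        / ((t powr (q - 1))\<^sup>2 + (- ((1 - t) powr (q - 1)))\<^sup>2) powr (3/2)"
    using assms by (intro curvature_eqI[of "{0<..<1}"]) auto
  also have "\<dots> = (1 - q) * exp (log_curv q t)"
  proof -
    define T S D where "T = t powr (q - 2)" and "S = (1 - t) powr (q - 2)"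
      and "D = t powr (2*q - 2) + (1 - t) powr (2*q - 2)"
    have "0 < T" "0 < S" "0 < D" using assms by (simp_all add: T_def S_def D_def add_pos_pos)
    have pow: "t powr (q - 1) = T * t" "(1 - t) powr (q - 1) = S * (1 - t)"
      using assms powr_add[of t "q - 2" 1] powr_add[of "1 - t" "q - 2" 1] by (simp_all add: T_def S_def)
    have sq: "(t powr (q - 1))\<^sup>2 = t powr (2*q - 2)" "((1 - t) powr (q - 1))\<^sup>2 = (1 - t) powr (2*q - 2)"
      by (simp_all add: powr_add[symmetric] power2_eq_square)
    have "exp (log_curv q t) = exp ((q - 2) * ln t) * exp ((q - 2) * ln (1 - t)) / exp (3/2 * ln D)"
      unfolding log_curv_def D_def by (simp add: exp_diff exp_add distrib_left)
    also have "\<dots> = T * S / D powr (3/2)"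
      using assms \<open>0 < D\<close> by (simp add: T_def S_def powr_def)
    finally have "exp (log_curv q t) = T * S / D powr (3/2)" .
    moreover have "\<bar>T * t * ((q - 1) * S) - (q - 1) * T * - (S * (1 - t))\<bar> = (1 - q) * T * S"
      using assms \<open>0 < T\<close> \<open>0 < S\<close> by (simp add: algebra_simps abs_mult)
    ultimately show ?thesis
      unfolding power2_minus sq D_def[symmetric] unfolding pow T_def[symmetric] S_def[symmetric] by simp
  qed
  finally show ?thesis .
qed

lemma log_curv_fst_P12:
  assumes "\<rho> \<in> P12"
  shows "log_curv q (fst \<rho>) = log_curv q (max (fst \<rho>) (snd \<rho>))"
proof -
  have "snd \<rho> = 1 - fst \<rho>" using assms by (simp add: P12_def)
  then show ?thesis by (simp add: max_def log_curv_one_minus)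
qed

lemma curv_ereal_eq:
  assumes "1 < p" "\<rho> \<in> P12"
  shows "curv (ereal p) \<rho> = (1 - 1/p) * exp (log_curv (1/p) (max (fst \<rho>) (snd \<rho>)))"
proof -
  have "(\<lambda>t. A (ereal p) (t, 1 - t)) = (\<lambda>s. (p * s powr (1/p), p * (1 - s) powr (1/p)))"
    by (simp add: A_def Acomp_def)
  moreover have "curvature (\<lambda>s. (p * s powr (1/p), p * (1 - s) powr (1/p))) (fst \<rho>)
      = (1 - 1/p) * exp (log_curv (1/p) (fst \<rho>))"
    using assms by (intro curvature_eq_log_curv) (auto intro!: derivative_eq_intros simp: P12_def)
  ultimately show ?thesis using log_curv_fst_P12[OF assms(2)] by (simp add: curv_def)
qed

lemma curv_PInfty_eq:
  assumes "\<rho> \<in> P12"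
  shows "curv \<infinity> \<rho> = exp (log_curv 0 (max (fst \<rho>) (snd \<rho>)))"
proof -
  have "(\<lambda>t. A \<infinity> (t, 1 - t)) = (\<lambda>s. (ln s, ln (1 - s)))"
    by (simp add: A_def Acomp_def)
  moreover have "curvature (\<lambda>s. (ln s, ln (1 - s))) (fst \<rho>) = (1 - 0) * exp (log_curv 0 (fst \<rho>))"
    using assms by (intro curvature_eq_log_curv)
      (auto intro!: derivative_eq_intros simp: P12_def powr_minus_divide)
  ultimately show ?thesis using log_curv_fst_P12[OF assms] by (simp add: curv_def)
qed

lemma strictly_schur_increasing_on_log_curv:
  assumes "\<forall>\<rho>\<in>P12. f \<rho> = (1 - q) * exp (log_curv q (max (fst \<rho>) (snd \<rho>)))" "q < 1/2"
  shows "strictly_schur_increasing_on P12 f"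
proof (rule strictly_schur_increasing_on_P12I[OF assms(1)], rule monotone_onI)
  fix a b :: real assume "a \<in> {1/2..<1}" "b \<in> {1/2..<1}" "a < b"
  then have "log_curv q b < log_curv q a"
    using log_curv_diff_sign[of a b q] \<open>q < 1/2\<close> by (simp add: zero_less_mult_iff)
  then show "(1 - q) * exp (log_curv q b) < (1 - q) * exp (log_curv q a)"
    using \<open>q < 1/2\<close> by simp
qed

lemma strictly_schur_decreasing_on_log_curv:
  assumes "\<forall>\<rho>\<in>P12. f \<rho> = (1 - q) * exp (log_curv q (max (fst \<rho>) (snd \<rho>)))" "1/2 < q" "q < 1"
  shows "strictly_schur_decreasing_on P12 f"
  unfolding strictly_schur_decreasing_on_iff_uminus
proof (rule strictly_schur_increasing_on_P12I[where h = "\<lambda>m. - ((1 - q) * exp (log_curv q m))"])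
  show "\<forall>\<rho>\<in>P12. - f \<rho> = - ((1 - q) * exp (log_curv q (max (fst \<rho>) (snd \<rho>))))"
    using assms(1) by simp
  show "strict_antimono_on {1/2..<1} (\<lambda>m. - ((1 - q) * exp (log_curv q m)))"
  proof (rule monotone_onI)
    fix a b :: real assume "a \<in> {1/2..<1}" "b \<in> {1/2..<1}" "a < b"
    then have "log_curv q a < log_curv q b"
      using log_curv_diff_sign[of a b q] assms(2,3) by (simp add: zero_less_mult_iff)
    then show "- ((1 - q) * exp (log_curv q b)) < - ((1 - q) * exp (log_curv q a))"
      using \<open>q < 1\<close> by simp
  qed
qed

theorem mainTheorem3:
  shows "(\<forall>p::real. 1 < p \<and> p < 2 \<longrightarrow> strictly_schur_decreasing_on P12 (curv (ereal p)))
       \<and> (\<forall>p::ereal. 2 < p \<longrightarrow> strictly_schur_increasing_on P12 (curv p))"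
proof (intro conjI allI impI)
  fix p :: real assume "1 < p \<and> p < 2"
  then show "strictly_schur_decreasing_on P12 (curv (ereal p))"
    by (intro strictly_schur_decreasing_on_log_curv[of _ "1/p"]) (auto simp: curv_ereal_eq field_simps)
next
  fix p :: ereal assume "2 < p"
  then show "strictly_schur_increasing_on P12 (curv p)"
  proof (cases p)
    case (real r)
    with \<open>2 < p\<close> show ?thesis
      by (intro strictly_schur_increasing_on_log_curv[of _ "1/r"]) (auto simp: curv_ereal_eq field_simps)
  next
    case PInf
    show ?thesis unfolding PInf
      by (intro strictly_schur_increasing_on_log_curv[of _ 0]) (simp_all add: curv_PInfty_eq)
  qed simp
qed

end
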